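(* Let $B$ be a finite simplicial complex and $a$ a simplicial $1$-cochain on $B$ with values $\pm1$ such that $\mathcal{F}(da)$ is a cocycle. Then the consistent collection of framed small necklaces over the $2$-skeleton of $B$ determined by $a$ (the small symmetric triangulated circle bundle over the $2$-skeleton) extends uniquely to a consistent collection of framed small necklaces over the $3$-skeleton of $B$.
   Context: A necklace over a simplex $\sigma$ is a cyclic word whose beads are colored by the vertices of $\sigma$; for a face $\tau\subset\sigma$ the necklace of $\tau$ is obtained by deleting beads whose colors are not in $\tau$, and a collection of necklaces over the simplices of a complex is consistent if it satisfies this for all face inclusions (with compatible inclusion morphisms). A small necklace has exactly two beads of each color and is invariant under rotation by half its length; framed means one bead of each color is bold, and consistency requires bold beads to map to bold beads. The collection determined by $a$: on an edge $[i,j]$ the framed necklace $ijij$ has the bead after the bold $i$ equal to the bold $j$ iff $a([i,j])=+1$; on each triangle it is the unique framed small necklace restricting to these edge necklaces. $d$ is the simplicial coboundary and $\mathcal{F}(3)=\mathcal{F}(-1)=1/4$, $\mathcal{F}(-3)=\mathcal{F}(1)=-1/4$ applied valuewise. *)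

theory Defs
  imports Complex_Main
begin

definition simplicial_complex :: "'v set set \<Rightarrow> bool" where
  "simplicial_complex B \<longleftrightarrow>
     (\<forall>\<sigma>\<in>B. finite \<sigma> \<and> \<sigma> \<noteq> {}) \<and>
     (\<forall>\<sigma>\<in>B. \<forall>\<tau>. \<tau> \<noteq> {} \<longrightarrow> \<tau> \<subseteq> \<sigma> \<longrightarrow> \<tau> \<in> B)"

definition skeleton :: "'v set set \<Rightarrow> nat \<Rightarrow> 'v set set" where
  "skeleton B k = {\<sigma>\<in>B. card \<sigma> \<le> k + 1}"

text \<open>Simplicial coboundary of a cochain c (defined on simplices, given as vertex sets,
  oriented by the vertex order): for sigma = [v0 < ... < v_(k+1)],
  (d c)(sigma) = sum over m of (-1)^m c(sigma without v_m).\<close>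
definition cobdry :: "('v::linorder set \<Rightarrow> 'a::ab_group_add) \<Rightarrow> 'v set \<Rightarrow> 'a" where
  "cobdry c \<sigma> = (\<Sum>v\<in>\<sigma>. if even (card {u\<in>\<sigma>. u < v}) then c (\<sigma> - {v}) else - c (\<sigma> - {v}))"

definition F :: "int \<Rightarrow> real" where
  "F x = (if x = 3 \<or> x = -1 then 1/4 else if x = -3 \<or> x = 1 then -1/4 else 0)"

text \<open>A framed necklace is represented by a list of beads (colour, bold?) read cyclically;
  two lists represent the same necklace iff they differ by a rotation.\<close>

type_synonym 'v fnecklace = "('v \<times> bool) list"

definition neck_eq :: "'v fnecklace \<Rightarrow> 'v fnecklace \<Rightarrow> bool" where
  "neck_eq xs ys \<longleftrightarrow> (\<exists>k. rotate k xs = ys)"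

definition restrict_neck :: "'v set \<Rightarrow> 'v fnecklace \<Rightarrow> 'v fnecklace" where
  "restrict_neck \<tau> xs = filter (\<lambda>b. fst b \<in> \<tau>) xs"

definition framed_small :: "'v set \<Rightarrow> 'v fnecklace \<Rightarrow> bool" where
  "framed_small \<sigma> xs \<longleftrightarrow>
     fst ` set xs \<subseteq> \<sigma> \<and>
     (\<forall>c\<in>\<sigma>. length (filter (\<lambda>b. fst b = c) xs) = 2) \<and>
     (\<forall>c\<in>\<sigma>. length (filter (\<lambda>b. b = (c, True)) xs) = 1) \<and>
     map fst (rotate (length xs div 2) xs) = map fst xs"

definition consistent_fs :: "'v set set \<Rightarrow> nat \<Rightarrow> ('v set \<Rightarrow> 'v fnecklace) \<Rightarrow> bool" where
  "consistent_fs B k N \<longleftrightarrow>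
     (\<forall>\<sigma>\<in>skeleton B k. framed_small \<sigma> (N \<sigma>)) \<and>
     (\<forall>\<sigma>\<in>skeleton B k. \<forall>\<tau>. \<tau> \<noteq> {} \<longrightarrow> \<tau> \<subseteq> \<sigma> \<longrightarrow> neck_eq (restrict_neck \<tau> (N \<sigma>)) (N \<tau>))"

definition edge_sign :: "'v fnecklace \<Rightarrow> 'v \<Rightarrow> 'v \<Rightarrow> int" where
  "edge_sign xs i j =
     (if \<exists>p<length xs. xs ! p = (i, True) \<and> xs ! (Suc p mod length xs) = (j, True)
      then 1 else -1)"

definition determined_by :: "'v::linorder set set \<Rightarrow> ('v set \<Rightarrow> int) \<Rightarrow> ('v set \<Rightarrow> 'v fnecklace) \<Rightarrow> bool" where
  "determined_by B a N \<longleftrightarrow>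
     consistent_fs B 2 N \<and>
     (\<forall>i j. {i, j} \<in> B \<longrightarrow> i < j \<longrightarrow> edge_sign (N {i, j}) i j = a {i, j})"

definition extends_to_3 :: "'v set set \<Rightarrow> ('v set \<Rightarrow> 'v fnecklace) \<Rightarrow> ('v set \<Rightarrow> 'v fnecklace) \<Rightarrow> bool" where
  "extends_to_3 B N2 N3 \<longleftrightarrow>
     consistent_fs B 3 N3 \<and> (\<forall>\<sigma>\<in>skeleton B 2. neck_eq (N3 \<sigma>) (N2 \<sigma>))"

end

theory Submission
  imports Defs
begin

text \<open>Up to rotation, a framed small necklace over a simplex is a word \<open>cs\<close> listing each colour
  once, followed by \<open>cs\<close> again, each colour being bold in exactly one of its two copies;
  rotating so that a fixed colour comes first in bold gives a normal form. On a simplex with at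
  most four vertices there are finitely many normal forms, and evaluation shows that they restrict
  to framed small necklaces, that they are determined by their edge signs, and that every
  \<open>\<plusminus>1\<close> sign vector on which \<open>cobdry (F \<circ> cobdry a)\<close> vanishes (no condition below
  dimension 3) is realised. So every simplex of the 3-skeleton carries exactly one framed small necklace
  with the edge signs prescribed by \<open>a\<close>, and consistency only has to be checked on edges.\<close>

subsection \<open>Cyclic words\<close>

lemma neck_eq_refl: "neck_eq xs xs"
  unfolding neck_eq_def by (metis rotate0 id_apply)

lemma neck_eq_rotate: "neck_eq xs (rotate k xs)"
  unfolding neck_eq_def by blast

lemma rotate_inverse: "\<exists>m. rotate m (rotate k xs) = xs"
proof (cases "xs = []")
  case False
  let ?L = "length xs"
  have "?L - k mod ?L + k mod ?L = ?L"
    using False by (simp add: order.strict_implies_order)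
  then have "rotate (?L - k mod ?L) (rotate (k mod ?L) xs) = xs"
    by (simp add: rotate_rotate)
  then show ?thesis
    by (metis rotate_conv_mod)
qed simp

lemma neck_eq_sym: "neck_eq xs ys \<Longrightarrow> neck_eq ys xs"
  unfolding neck_eq_def using rotate_inverse by blast

lemma neck_eq_trans: "neck_eq xs ys \<Longrightarrow> neck_eq ys zs \<Longrightarrow> neck_eq xs zs"
  unfolding neck_eq_def by (metis rotate_rotate)

lemma filter_rotate: "\<exists>m. filter P (rotate k xs) = rotate m (filter P xs)"
proof -
  let ?m = "k mod length xs"
  have "rotate k xs = drop ?m xs @ take ?m xs"
    by (rule rotate_drop_take)
  moreover have "filter P xs = filter P (take ?m xs) @ filter P (drop ?m xs)"
    by (metis append_take_drop_id filter_append)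
  ultimately show ?thesis
    by (metis filter_append rotate_append)
qed

lemma neck_eq_restrict_neck: "neck_eq xs ys \<Longrightarrow> neck_eq (restrict_neck \<tau> xs) (restrict_neck \<tau> ys)"
  unfolding neck_eq_def restrict_neck_def using filter_rotate by metis

lemma restrict_neck_restrict_neck:
  "\<tau> \<subseteq> \<sigma> \<Longrightarrow> restrict_neck \<tau> (restrict_neck \<sigma> xs) = restrict_neck \<tau> xs"
  unfolding restrict_neck_def by (auto intro: filter_cong)

lemma restrict_neck_framed_small: "framed_small \<sigma> xs \<Longrightarrow> restrict_neck \<sigma> xs = xs"
  unfolding framed_small_def restrict_neck_def by (auto intro!: filter_True)

text \<open>The bounded quantifier ranges over \<open>set [0..<_]\<close> so that the predicate can be evaluated.\<close>

definition cyclic_successor :: "'a list \<Rightarrow> 'a \<Rightarrow> 'a \<Rightarrow> bool" where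
  "cyclic_successor xs x y \<longleftrightarrow>
     (\<exists>p\<in>set [0..<length xs]. xs ! p = x \<and> xs ! (Suc p mod length xs) = y)"

lemma edge_sign_cyclic_successor:
  "edge_sign xs i j = (if cyclic_successor xs (i, True) (j, True) then 1 else -1)"
  unfolding edge_sign_def cyclic_successor_def by (auto simp: atLeast0LessThan)

lemma cyclic_successor_rotate_if:
  assumes "cyclic_successor xs x y"
  shows "cyclic_successor (rotate k xs) x y"
proof -
  let ?L = "length xs"
  obtain p where p: "p < ?L" "xs ! p = x" "xs ! (Suc p mod ?L) = y"
    using assms unfolding cyclic_successor_def by auto
  then have L: "?L > 0"
    by linarith
  define q where "q = (p + ?L - k mod ?L) mod ?L"
  have "(q + k) mod ?L = (p + ?L - k mod ?L + k mod ?L) mod ?L"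
    unfolding q_def by (simp add: mod_add_left_eq mod_add_right_eq)
  also have "\<dots> = (p + ?L) mod ?L"
    using mod_less_divisor[OF L, of k] by (metis le_add2 order.strict_trans2 le_add_diff_inverse2 less_imp_le_nat)
  also have "\<dots> = p"
    using p(1) by simp
  finally have qk: "(q + k) mod ?L = p" .
  then have "(Suc q mod ?L + k) mod ?L = Suc p mod ?L"
    by (metis add_Suc mod_Suc_eq mod_add_left_eq)
  then have "rotate k xs ! q = x" "rotate k xs ! (Suc q mod ?L) = y"
    using qk p L by (simp_all add: nth_rotate add.commute q_def)
  moreover have "q < ?L"
    using L by (simp add: q_def)
  ultimately show ?thesis
    unfolding cyclic_successor_def by auto
qed

lemma cyclic_successor_rotate: "cyclic_successor (rotate k xs) x y \<longleftrightarrow> cyclic_successor xs x y"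
  by (metis cyclic_successor_rotate_if rotate_inverse)

lemma cyclic_successor_map:
  assumes "inj_on f (insert x (insert y (set xs)))"
  shows "cyclic_successor (map f xs) (f x) (f y) \<longleftrightarrow> cyclic_successor xs x y"
proof -
  have "map f xs ! p = f x \<and> map f xs ! (Suc p mod length xs) = f y \<longleftrightarrow>
        xs ! p = x \<and> xs ! (Suc p mod length xs) = y" if "p < length xs" for p
  proof -
    have "length xs > 0"
      using that by linarith
    then have "Suc p mod length xs < length xs"
      by simp
    then show ?thesis
      using that inj_onD[OF assms] by (metis insertCI nth_map nth_mem)
  qed
  then show ?thesis
    unfolding cyclic_successor_def by auto
qed

lemma edge_sign_neck_eq: "neck_eq xs ys \<Longrightarrow> edge_sign xs i j = edge_sign ys i j"
  unfolding neck_eq_def edge_sign_cyclic_successor by (auto simp: cyclic_successor_rotate)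

lemma framed_small_rotate: "framed_small \<sigma> xs \<Longrightarrow> framed_small \<sigma> (rotate k xs)"
proof -
  assume small: "framed_small \<sigma> xs"
  have count: "length (filter P (rotate k xs)) = length (filter P xs)" for P
    by (metis filter_rotate length_rotate)
  have "map fst (rotate (length xs div 2) (rotate k xs)) =
        rotate k (map fst (rotate (length xs div 2) xs))"
    by (simp add: rotate_map rotate_rotate add.commute)
  also have "\<dots> = map fst (rotate k xs)"
    using small unfolding framed_small_def by (simp add: rotate_map)
  finally show ?thesis
    using small count unfolding framed_small_def by simp
qed

lemma framed_small_neck_eq: "framed_small \<sigma> xs \<Longrightarrow> neck_eq xs ys \<Longrightarrow> framed_small \<sigma> ys"
  unfolding neck_eq_def using framed_small_rotate by blast

subsection \<open>Normal form of framed small necklaces\<close>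

definition doubled :: "'a list \<Rightarrow> bool list \<Rightarrow> ('a \<times> bool) list" where
  "doubled cs bs = zip cs bs @ zip cs (map Not bs)"

lemma length_doubled: "length bs = length cs \<Longrightarrow> length (doubled cs bs) = 2 * length cs"
  by (simp add: doubled_def)

lemma nth_doubled:
  assumes "length bs = length cs" "i < 2 * length cs"
  shows "doubled cs bs ! i =
    (if i < length cs then (cs ! i, bs ! i) else (cs ! (i - length cs), \<not> bs ! (i - length cs)))"
  using assms by (auto simp: doubled_def nth_append)

lemma map_apfst_doubled:
  "length bs = length cs \<Longrightarrow> map (apfst f) (doubled cs bs) = doubled (map f cs) bs"
  by (simp add: doubled_def zip_map1 apfst_def map_prod_def split_def)

lemma length_eq_sum_colour_counts:
  "finite \<sigma> \<Longrightarrow> fst ` set xs \<subseteq> \<sigma> \<Longrightarrow> length xs = (\<Sum>c\<in>\<sigma>. length (filter (\<lambda>b. fst b = c) xs))"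
proof (induction xs)
  case (Cons x xs)
  have "(\<Sum>c\<in>\<sigma>. length (filter (\<lambda>b. fst b = c) (x # xs))) =
        (\<Sum>c\<in>\<sigma>. (if fst x = c then 1 else 0) + length (filter (\<lambda>b. fst b = c) xs))"
    by (rule sum.cong) auto
  also have "\<dots> = 1 + (\<Sum>c\<in>\<sigma>. length (filter (\<lambda>b. fst b = c) xs))"
    using Cons.prems by (simp add: sum.distrib)
  finally show ?case
    using Cons by simp
qed simp

context
  fixes \<sigma> :: "'v set" and xs :: "'v fnecklace" and n :: nat
  assumes finite: "finite \<sigma>" and small: "framed_small \<sigma> xs" and n_def: "n = card \<sigma>"
begin

lemma framed_small_length: "length xs = 2 * n"
  using length_eq_sum_colour_counts[OF finite, of xs] small
  unfolding framed_small_def n_def by simp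

lemma framed_small_colour: "i < 2 * n \<Longrightarrow> fst (xs ! i) \<in> \<sigma>"
  using small framed_small_length unfolding framed_small_def by force

lemma framed_small_colour_positions:
  "c \<in> \<sigma> \<Longrightarrow> card {i. i < 2 * n \<and> fst (xs ! i) = c} = 2"
  using small framed_small_length unfolding framed_small_def
  by (simp add: length_filter_conv_card)

lemma framed_small_bold_positions:
  "c \<in> \<sigma> \<Longrightarrow> card {i. i < 2 * n \<and> xs ! i = (c, True)} = 1"
  using small framed_small_length unfolding framed_small_def
  by (simp add: length_filter_conv_card)

lemma framed_small_colour_periodic: "p < n \<Longrightarrow> fst (xs ! (n + p)) = fst (xs ! p)"
proof -
  assume p: "p < n"
  have "map fst (rotate n xs) = map fst xs"
    using small framed_small_length unfolding framed_small_def by simp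
  moreover have "p < length xs"
    using p framed_small_length by simp
  ultimately have "fst (rotate n xs ! p) = fst (xs ! p)"
    by (metis length_rotate nth_map)
  then show ?thesis
    using p framed_small_length by (simp add: nth_rotate add.commute)
qed

lemma framed_small_first_half_distinct:
  assumes "p < n" "q < n" "p \<noteq> q"
  shows "fst (xs ! p) \<noteq> fst (xs ! q)"
proof
  assume same: "fst (xs ! p) = fst (xs ! q)"
  let ?c = "fst (xs ! p)"
  have "?c \<in> \<sigma>"
    using assms(1) framed_small_colour by simp
  moreover have "{p, q, n + p, n + q} \<subseteq> {i. i < 2 * n \<and> fst (xs ! i) = ?c}"
    using assms same framed_small_colour_periodic by auto
  ultimately have "card {p, q, n + p, n + q} \<le> 2"
    using framed_small_colour_positions card_mono[of "{i. i < 2 * n \<and> fst (xs ! i) = ?c}"]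
    by fastforce
  then show False
    using assms by auto
qed

lemma framed_small_bold_complement: "p < n \<Longrightarrow> snd (xs ! (n + p)) \<longleftrightarrow> \<not> snd (xs ! p)"
proof (rule ccontr)
  assume p: "p < n" and equal: "\<not> (snd (xs ! (n + p)) \<longleftrightarrow> \<not> snd (xs ! p))"
  let ?c = "fst (xs ! p)"
  let ?S = "{i. i < 2 * n \<and> fst (xs ! i) = ?c}"
  have c: "?c \<in> \<sigma>"
    using p framed_small_colour by simp
  have "{p, n + p} \<subseteq> ?S"
    using p framed_small_colour_periodic[OF p] by simp
  moreover have "card {p, n + p} = 2"
    using p by simp
  moreover have "finite ?S"
    by simp
  ultimately have positions: "?S = {p, n + p}"
    using framed_small_colour_positions[OF c] by (metis card_subset_eq)
  have "{i. i < 2 * n \<and> xs ! i = (?c, True)} = {i \<in> ?S. snd (xs ! i)}"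
    by (auto simp: prod_eq_iff)
  also have "\<dots> = (if snd (xs ! p) then {p, n + p} else {})"
    unfolding positions using equal by auto
  finally show False
    using framed_small_bold_positions[OF c] p by (simp split: if_splits)
qed

lemma framed_small_eq_doubled:
  "xs = doubled (map fst (take n xs)) (map snd (take n xs))"
proof (rule nth_equalityI)
  show "length xs = length (doubled (map fst (take n xs)) (map snd (take n xs)))"
    by (simp add: length_doubled framed_small_length)
next
  fix i assume "i < length xs"
  then have i: "i < 2 * n"
    using framed_small_length by simp
  show "xs ! i = doubled (map fst (take n xs)) (map snd (take n xs)) ! i"
  proof (cases "i < n")
    case False
    then obtain p where "i = n + p" "p < n"
      using i by (metis add_diff_inverse_nat add_less_imp_less_left mult_2)
    then show ?thesis
      using framed_small_length framed_small_colour_periodic framed_small_bold_complement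
      by (auto simp: nth_doubled prod_eq_iff)
  qed (use i framed_small_length in \<open>auto simp: nth_doubled prod_eq_iff\<close>)
qed

end

lemma framed_small_normal_form:
  assumes finite: "finite \<sigma>" and small: "framed_small \<sigma> xs" and v: "v \<in> \<sigma>"
  shows "\<exists>k cs bs. rotate k xs = doubled cs bs \<and> distinct cs \<and> set cs = \<sigma> \<and>
                   length bs = length cs \<and> hd cs = v \<and> hd bs"
proof -
  let ?n = "card \<sigma>"
  have n: "?n > 0"
    using finite v card_gt_0_iff by blast
  have "length (filter (\<lambda>b. b = (v, True)) xs) = 1"
    using small v unfolding framed_small_def by blast
  then have "filter (\<lambda>b. b = (v, True)) xs \<noteq> []"
    by auto
  then have "(v, True) \<in> set xs"
    by (auto simp: filter_empty_conv)
  then obtain k where k: "k < length xs" "xs ! k = (v, True)"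
    by (metis in_set_conv_nth)
  define ys where "ys = rotate k xs"
  have small_ys: "framed_small \<sigma> ys"
    unfolding ys_def using small framed_small_rotate by blast
  have ys0: "ys ! 0 = (v, True)"
    unfolding ys_def using k nth_rotate[of 0 xs k] by force
  have len: "length ys = 2 * ?n"
    using framed_small_length[OF finite small_ys refl] .
  define cs where "cs = map fst (take ?n ys)"
  define bs where "bs = map snd (take ?n ys)"
  have length: "length cs = ?n" "length bs = ?n"
    unfolding cs_def bs_def using len by auto
  have nth: "cs ! p = fst (ys ! p)" "bs ! p = snd (ys ! p)" if "p < ?n" for p
    unfolding cs_def bs_def using that len by auto
  have distinct: "distinct cs"
    unfolding distinct_conv_nth
    using length nth framed_small_first_half_distinct[OF finite small_ys refl] by auto
  have "set cs \<subseteq> \<sigma>"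
    using length nth framed_small_colour[OF finite small_ys refl] by (auto simp: in_set_conv_nth)
  moreover have "card (set cs) = ?n"
    using distinct length by (simp add: distinct_card)
  ultimately have set: "set cs = \<sigma>"
    using finite by (simp add: card_subset_eq)
  have "cs \<noteq> []" "bs \<noteq> []"
    using n length by auto
  then have "hd cs = v" "hd bs"
    using n nth[of 0] ys0 by (simp_all add: hd_conv_nth)
  moreover have "ys = doubled cs bs"
    unfolding cs_def bs_def by (rule framed_small_eq_doubled[OF finite small_ys refl])
  ultimately show ?thesis
    using distinct set length unfolding ys_def by (intro exI[of _ k] exI[of _ cs] exI[of _ bs]) simp
qed

subsection \<open>Normal forms over \<open>{0..<n}\<close> and their evaluation\<close>

definition index_pairs :: "nat \<Rightarrow> (nat \<times> nat) list" where
  "index_pairs n = [(i, j). i \<leftarrow> [0..<n], j \<leftarrow> [Suc i..<n]]"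

definition normal_necklaces :: "nat \<Rightarrow> (nat \<times> bool) list list" where
  "normal_necklaces n =
     [doubled cs bs. cs \<leftarrow> List.n_lists n [0..<n], distinct cs \<and> hd cs = 0,
                     bs \<leftarrow> List.n_lists n [True, False], hd bs]"

definition edge_signs :: "nat \<Rightarrow> (nat \<times> bool) list \<Rightarrow> int list" where
  "edge_signs n G =
     [if cyclic_successor (restrict_neck {i, j} G) (i, True) (j, True) then 1 else -1.
        (i, j) \<leftarrow> index_pairs n]"

text \<open>The list \<open>s\<close> holds the values of a 1-cochain on the edges 01, 02, 03, 12, 13, 23 of a
  3-simplex (the order of \<open>index_pairs 4\<close>); the condition says \<open>cobdry (F \<circ> cobdry s)\<close> vanishes.\<close>

definition cocycle_condition4 :: "int list \<Rightarrow> bool" where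
  "cocycle_condition4 s \<longleftrightarrow>
     F (s!5 - s!4 + s!3) - F (s!5 - s!2 + s!1) + F (s!4 - s!2 + s!0) - F (s!3 - s!1 + s!0) = 0"

lemma set_index_pairs: "(i, j) \<in> set (index_pairs n) \<longleftrightarrow> i < j \<and> j < n"
  unfolding index_pairs_def by (auto simp: image_iff intro!: bexI[of _ i])

lemma ball_index_pairs: "(\<forall>x\<in>set (index_pairs n). P x) \<longleftrightarrow> (\<forall>p q. p < q \<longrightarrow> q < n \<longrightarrow> P (p, q))"
  by (auto simp: set_index_pairs)

lemma doubled_in_normal_necklaces:
  assumes "length cs = n" "set cs \<subseteq> {0..<n}" "distinct cs" "hd cs = 0" "length bs = n" "hd bs"
  shows "doubled cs bs \<in> set (normal_necklaces n)"
  using assms unfolding normal_necklaces_def by (auto simp: set_n_lists)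

lemma normal_necklaces_colours: "G \<in> set (normal_necklaces n) \<Longrightarrow> fst ` set G \<subseteq> {0..<n}"
  unfolding normal_necklaces_def doubled_def by (auto simp: set_n_lists dest!: set_zip_leftD)

lemma edge_signs_eq: "edge_signs n G = [edge_sign (restrict_neck {i, j} G) i j. (i, j) \<leftarrow> index_pairs n]"
  unfolding edge_signs_def edge_sign_cyclic_successor ..

text \<open>The next three facts are checked by evaluation over all normal forms; at most four
  colours occur because the simplices of the 3-skeleton have at most four vertices.\<close>

lemma normal_necklaces_restrict_framed_small:
  assumes "0 < n" "n \<le> 4" "G \<in> set (normal_necklaces n)" "\<tau> \<subseteq> {0..<n}" "\<tau> \<noteq> {}"
  shows "framed_small \<tau> (restrict_neck \<tau> G)"
proof -
  have "list_all (\<lambda>n. \<forall>G\<in>set (normal_necklaces n). \<forall>ts\<in>set (subseqs [0..<n]).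
          ts \<noteq> [] \<longrightarrow> framed_small (set ts) (restrict_neck (set ts) G)) [1, 2, 3, 4]"
    by code_simp
  moreover obtain ts where "ts \<in> set (subseqs [0..<n])" "set ts = \<tau>"
    using subset_subseqs[of \<tau> "[0..<n]"] assms(4) by auto
  moreover have "n \<in> {1, 2, 3, 4}"
    using assms(1,2) by auto
  ultimately show ?thesis
    using assms(3,5) by auto
qed

lemma inj_on_edge_signs:
  assumes "0 < n" "n \<le> 4"
  shows "inj_on (edge_signs n) (set (normal_necklaces n))"
proof -
  have "list_all (\<lambda>n. distinct (map (edge_signs n) (normal_necklaces n))) [1, 2, 3, 4]"
    by code_simp
  moreover have "n \<in> {1, 2, 3, 4}"
    using assms by auto
  ultimately show ?thesis
    by (auto simp: distinct_map)
qed

lemma edge_signs_surjective: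
  assumes "0 < n" "n \<le> 4" "length s = length (index_pairs n)" "set s \<subseteq> {1, -1}"
    and "n = 4 \<Longrightarrow> cocycle_condition4 s"
  shows "\<exists>G\<in>set (normal_necklaces n). edge_signs n G = s"
proof -
  have "list_all (\<lambda>n. \<forall>s\<in>set (List.n_lists (length (index_pairs n)) [1, -1]).
          (n = 4 \<longrightarrow> cocycle_condition4 s) \<longrightarrow> s \<in> set (map (edge_signs n) (normal_necklaces n)))
        [1, 2, 3, 4]"
    by code_simp
  moreover have "s \<in> set (List.n_lists (length (index_pairs n)) [1, -1])"
    using assms(3,4) by (auto simp: set_n_lists)
  moreover have "n \<in> {1, 2, 3, 4}"
    using assms(1,2) by auto
  ultimately show ?thesis
    using assms(5) by auto
qed

subsection \<open>Relabelling vertices\<close>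

definition nth_vertex :: "'v::linorder set \<Rightarrow> nat \<Rightarrow> 'v" where
  "nth_vertex \<sigma> i = sorted_list_of_set \<sigma> ! i"

lemma nth_vertex_image: "finite \<sigma> \<Longrightarrow> nth_vertex \<sigma> ` {0..<card \<sigma>} = \<sigma>"
proof -
  have "nth_vertex \<sigma> ` {0..<card \<sigma>} = set (sorted_list_of_set \<sigma>)"
    unfolding nth_vertex_def by (force simp: in_set_conv_nth image_def)
  then show "finite \<sigma> \<Longrightarrow> ?thesis"
    by simp
qed

lemma nth_vertex_less: "finite \<sigma> \<Longrightarrow> p < q \<Longrightarrow> q < card \<sigma> \<Longrightarrow> nth_vertex \<sigma> p < nth_vertex \<sigma> q"
  unfolding nth_vertex_def using sorted_wrt_nth_less[OF strict_sorted_list_of_set[of \<sigma>]] by simp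

lemma inj_on_nth_vertex: "finite \<sigma> \<Longrightarrow> inj_on (nth_vertex \<sigma>) {0..<card \<sigma>}"
  unfolding nth_vertex_def inj_on_def by (simp add: nth_eq_iff_index_eq)

lemma nth_vertex_edge:
  assumes "finite \<sigma>" "i \<in> \<sigma>" "j \<in> \<sigma>" "i < j"
  obtains p q where "p < q" "q < card \<sigma>" "i = nth_vertex \<sigma> p" "j = nth_vertex \<sigma> q"
proof -
  have "i \<in> nth_vertex \<sigma> ` {0..<card \<sigma>}" "j \<in> nth_vertex \<sigma> ` {0..<card \<sigma>}"
    using nth_vertex_image[OF assms(1)] assms(2,3) by simp_all
  then obtain p q where p: "p < card \<sigma>" "i = nth_vertex \<sigma> p" and q: "q < card \<sigma>" "j = nth_vertex \<sigma> q"
    by auto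
  have "p < q"
  proof (rule ccontr)
    assume "\<not> p < q"
    then have "q < p \<or> q = p"
      by auto
    then show False
      using nth_vertex_less[OF assms(1), of q p] p q assms(4) by auto
  qed
  then show ?thesis
    using that p q by blast
qed

lemma ball_nth_vertex_pairs:
  fixes \<sigma> :: "'v::linorder set"
  assumes finite: "finite \<sigma>"
  shows "(\<forall>i\<in>\<sigma>. \<forall>j\<in>\<sigma>. i < j \<longrightarrow> P i j) \<longleftrightarrow>
         (\<forall>p q. p < q \<longrightarrow> q < card \<sigma> \<longrightarrow> P (nth_vertex \<sigma> p) (nth_vertex \<sigma> q))"
proof
  assume "\<forall>i\<in>\<sigma>. \<forall>j\<in>\<sigma>. i < j \<longrightarrow> P i j"
  moreover have "nth_vertex \<sigma> p \<in> \<sigma>" "nth_vertex \<sigma> q \<in> \<sigma>" "nth_vertex \<sigma> p < nth_vertex \<sigma> q"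
    if "p < q" "q < card \<sigma>" for p q
    using that nth_vertex_image[OF finite] nth_vertex_less[OF finite] by auto
  ultimately show "\<forall>p q. p < q \<longrightarrow> q < card \<sigma> \<longrightarrow> P (nth_vertex \<sigma> p) (nth_vertex \<sigma> q)"
    by blast
next
  assume "\<forall>p q. p < q \<longrightarrow> q < card \<sigma> \<longrightarrow> P (nth_vertex \<sigma> p) (nth_vertex \<sigma> q)"
  then show "\<forall>i\<in>\<sigma>. \<forall>j\<in>\<sigma>. i < j \<longrightarrow> P i j"
    using nth_vertex_edge[OF finite] by metis
qed

lemma filter_map_apfst:
  "(\<And>b. b \<in> set G \<Longrightarrow> P (apfst f b) \<longleftrightarrow> Q b) \<Longrightarrow> filter P (map (apfst f) G) = map (apfst f) (filter Q G)"
  by (induction G) auto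

lemma inj_on_apfst: "inj_on f S \<Longrightarrow> inj_on (apfst f) {b. fst b \<in> S}"
  unfolding inj_on_def by (auto simp: apfst_def map_prod_def split_def prod_eq_iff)

lemma restrict_neck_map_apfst:
  assumes "inj_on f S" "\<tau> \<subseteq> S" "fst ` set G \<subseteq> S"
  shows "restrict_neck (f ` \<tau>) (map (apfst f) G) = map (apfst f) (restrict_neck \<tau> G)"
  unfolding restrict_neck_def
proof (intro filter_map_apfst)
  fix b assume "b \<in> set G"
  then have "fst b \<in> S"
    using assms(3) by auto
  then show "fst (apfst f b) \<in> f ` \<tau> \<longleftrightarrow> fst b \<in> \<tau>"
    using inj_on_image_mem_iff[OF assms(1) _ assms(2)] by simp
qed

lemma framed_small_map_apfst:
  assumes inj: "inj_on f S" and "\<tau> \<subseteq> S" and small: "framed_small \<tau> G"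
  shows "framed_small (f ` \<tau>) (map (apfst f) G)"
proof -
  have colours: "fst ` set G \<subseteq> \<tau>"
    using small unfolding framed_small_def by blast
  have "length (filter (\<lambda>b. fst b = f t) (map (apfst f) G)) = length (filter (\<lambda>b. fst b = t) G)"
    if "t \<in> \<tau>" for t
  proof -
    have "fst b = t" if "b \<in> set G" "f (fst b) = f t" for b
      using that \<open>t \<in> \<tau>\<close> colours assms(2) inj_onD[OF inj] by force
    then show ?thesis
      by (subst filter_map_apfst[where Q = "\<lambda>b. fst b = t"]) auto
  qed
  moreover have "length (filter (\<lambda>b. b = (f t, True)) (map (apfst f) G)) = length (filter (\<lambda>b. b = (t, True)) G)"
    if "t \<in> \<tau>" for t
  proof -
    have "fst b = t" if "b \<in> set G" "f (fst b) = f t" for b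
      using that \<open>t \<in> \<tau>\<close> colours assms(2) inj_onD[OF inj] by force
    then show ?thesis
      by (subst filter_map_apfst[where Q = "\<lambda>b. b = (t, True)"]) (auto simp: prod_eq_iff)
  qed
  moreover have "map fst (rotate (length G div 2) (map (apfst f) G)) = map f (map fst (rotate (length G div 2) G))"
    by (simp add: rotate_map)
  ultimately show ?thesis
    using small unfolding framed_small_def by (auto simp: rotate_map)
qed

lemma edge_sign_map_apfst:
  assumes inj: "inj_on f S" and colours: "fst ` set G \<subseteq> S" and "i \<in> S" "j \<in> S"
  shows "edge_sign (restrict_neck {f i, f j} (map (apfst f) G)) (f i) (f j) =
         edge_sign (restrict_neck {i, j} G) i j"
proof -
  have restrict: "restrict_neck {f i, f j} (map (apfst f) G) = map (apfst f) (restrict_neck {i, j} G)"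
    using restrict_neck_map_apfst[OF inj _ colours, of "{i, j}"] assms(3,4) by simp
  have "inj_on (apfst f) (insert (i, True) (insert (j, True) (set (restrict_neck {i, j} G))))"
    by (rule inj_on_subset[OF inj_on_apfst[OF inj]]) (use assms(3,4) colours in \<open>auto simp: restrict_neck_def\<close>)
  from cyclic_successor_map[OF this] show ?thesis
    unfolding edge_sign_cyclic_successor restrict by simp
qed

lemma framed_small_relabel:
  fixes \<sigma> :: "'v::linorder set"
  assumes finite: "finite \<sigma>" and "\<sigma> \<noteq> {}" and small: "framed_small \<sigma> xs"
  shows "\<exists>k G. G \<in> set (normal_necklaces (card \<sigma>)) \<and> rotate k xs = map (apfst (nth_vertex \<sigma>)) G"
proof -
  let ?n = "card \<sigma>" and ?f = "nth_vertex \<sigma>"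
  have n: "0 < ?n"
    using assms by (simp add: card_gt_0_iff)
  have bij: "bij_betw ?f {0..<?n} \<sigma>"
    using inj_on_nth_vertex[OF finite] nth_vertex_image[OF finite] by (simp add: bij_betw_def)
  then have "?f 0 \<in> \<sigma>"
    using n by (auto dest: bij_betwE)
  then obtain k cs bs where nf: "rotate k xs = doubled cs bs" "distinct cs" "set cs = \<sigma>"
    "length bs = length cs" "hd cs = ?f 0" "hd bs"
    using framed_small_normal_form[OF finite small] by blast
  let ?g = "the_inv_into {0..<?n} ?f"
  have inverse: "?f (?g c) = c" "?g c < ?n" if "c \<in> \<sigma>" for c
    using bij that bij_betwE[OF bij_betw_the_inv_into[OF bij]] by (auto intro: f_the_inv_into_f_bij_betw)
  define ds where "ds = map ?g cs"
  have ds: "map ?f ds = cs" "set ds \<subseteq> {0..<?n}"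
    unfolding ds_def map_map using inverse nf(3) by (auto intro: map_idI)
  have length: "length cs = ?n"
    using nf(2,3) distinct_card by fastforce
  have "hd ds = 0"
  proof -
    have "ds \<noteq> []"
      using ds(1) length n by auto
    then have "hd ds \<in> {0..<?n}"
      using ds(2) hd_in_set by blast
    moreover have "?f (hd ds) = ?f 0"
      using ds(1) nf(5) \<open>ds \<noteq> []\<close> by (metis hd_map)
    ultimately show ?thesis
      using inj_on_nth_vertex[OF finite] n by (auto dest: inj_onD)
  qed
  then have "doubled ds bs \<in> set (normal_necklaces ?n)"
    using ds nf length distinct_map by (intro doubled_in_normal_necklaces) force+
  moreover have "rotate k xs = map (apfst ?f) (doubled ds bs)"
    using nf(1,4) ds(1) length by (simp add: map_apfst_doubled length_map[of ?f ds, symmetric])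
  ultimately show ?thesis
    by blast
qed

subsection \<open>Necklaces with prescribed edge signs on a small simplex\<close>

definition has_edge_signs :: "('v set \<Rightarrow> int) \<Rightarrow> 'v::linorder set \<Rightarrow> 'v fnecklace \<Rightarrow> bool" where
  "has_edge_signs a \<sigma> xs \<longleftrightarrow>
     (\<forall>i\<in>\<sigma>. \<forall>j\<in>\<sigma>. i < j \<longrightarrow> edge_sign (restrict_neck {i, j} xs) i j = a {i, j})"

definition vertex_signs :: "('v set \<Rightarrow> int) \<Rightarrow> 'v::linorder set \<Rightarrow> int list" where
  "vertex_signs a \<sigma> = [a {nth_vertex \<sigma> i, nth_vertex \<sigma> j}. (i, j) \<leftarrow> index_pairs (card \<sigma>)]"

lemma has_edge_signs_neck_eq: "neck_eq xs ys \<Longrightarrow> has_edge_signs a \<sigma> xs \<longleftrightarrow> has_edge_signs a \<sigma> ys"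
  unfolding has_edge_signs_def by (metis edge_sign_neck_eq neck_eq_restrict_neck)

lemma has_edge_signs_restrict_neck:
  "\<tau> \<subseteq> \<sigma> \<Longrightarrow> has_edge_signs a \<sigma> xs \<Longrightarrow> has_edge_signs a \<tau> (restrict_neck \<tau> xs)"
  unfolding has_edge_signs_def by (auto simp: restrict_neck_restrict_neck)

lemma has_edge_signs_relabel_iff:
  fixes \<sigma> :: "'v::linorder set"
  assumes finite: "finite \<sigma>" and G: "G \<in> set (normal_necklaces (card \<sigma>))"
  shows "has_edge_signs a \<sigma> (map (apfst (nth_vertex \<sigma>)) G) \<longleftrightarrow> edge_signs (card \<sigma>) G = vertex_signs a \<sigma>"
proof -
  let ?n = "card \<sigma>" and ?f = "nth_vertex \<sigma>"
  have relabel: "edge_sign (restrict_neck {?f p, ?f q} (map (apfst ?f) G)) (?f p) (?f q) =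
                 edge_sign (restrict_neck {p, q} G) p q" if "p < q" "q < ?n" for p q
    using edge_sign_map_apfst[OF inj_on_nth_vertex[OF finite] normal_necklaces_colours[OF G]] that
    by simp
  have "has_edge_signs a \<sigma> (map (apfst ?f) G) \<longleftrightarrow>
        (\<forall>p q. p < q \<longrightarrow> q < ?n \<longrightarrow> edge_sign (restrict_neck {p, q} G) p q = a {?f p, ?f q})"
    unfolding has_edge_signs_def ball_nth_vertex_pairs[OF finite] by (simp add: relabel)
  also have "\<dots> \<longleftrightarrow> edge_signs ?n G = vertex_signs a \<sigma>"
    unfolding edge_signs_eq vertex_signs_def map_eq_conv ball_index_pairs by simp
  finally show ?thesis .
qed

lemma has_edge_signs_unique:
  fixes \<sigma> :: "'v::linorder set"
  assumes finite: "finite \<sigma>" and "\<sigma> \<noteq> {}" "card \<sigma> \<le> 4"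
    and xs: "framed_small \<sigma> xs" "has_edge_signs a \<sigma> xs"
    and ys: "framed_small \<sigma> ys" "has_edge_signs a \<sigma> ys"
  shows "neck_eq xs ys"
proof -
  let ?n = "card \<sigma>" and ?f = "nth_vertex \<sigma>"
  have signs: "edge_signs ?n G = vertex_signs a \<sigma>"
    if "G \<in> set (normal_necklaces ?n)" "rotate k zs = map (apfst ?f) G" "has_edge_signs a \<sigma> zs"
    for G k zs
    using that has_edge_signs_relabel_iff[OF finite] has_edge_signs_neck_eq[OF neck_eq_rotate] by metis
  obtain k G where G: "G \<in> set (normal_necklaces ?n)" "rotate k xs = map (apfst ?f) G"
    using framed_small_relabel[OF finite \<open>\<sigma> \<noteq> {}\<close> xs(1)] by blast
  obtain l H where H: "H \<in> set (normal_necklaces ?n)" "rotate l ys = map (apfst ?f) H"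
    using framed_small_relabel[OF finite \<open>\<sigma> \<noteq> {}\<close> ys(1)] by blast
  have "0 < ?n"
    using assms(1,2) by (simp add: card_gt_0_iff)
  then have "G = H"
    using inj_on_edge_signs[of ?n] assms(3) signs[OF G xs(2)] signs[OF H ys(2)] G(1) H(1)
    by (metis inj_onD)
  then have "rotate k xs = rotate l ys"
    using G(2) H(2) by simp
  then show ?thesis
    by (metis neck_eq_rotate neck_eq_sym neck_eq_trans)
qed

lemma framed_small_restrict_neck:
  fixes \<sigma> :: "'v::linorder set"
  assumes finite: "finite \<sigma>" and "\<sigma> \<noteq> {}" "card \<sigma> \<le> 4" and small: "framed_small \<sigma> xs"
    and "\<tau> \<subseteq> \<sigma>" "\<tau> \<noteq> {}"
  shows "framed_small \<tau> (restrict_neck \<tau> xs)"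
proof -
  let ?n = "card \<sigma>" and ?f = "nth_vertex \<sigma>"
  obtain k G where G: "G \<in> set (normal_necklaces ?n)" "rotate k xs = map (apfst ?f) G"
    using framed_small_relabel[OF finite \<open>\<sigma> \<noteq> {}\<close> small] by blast
  define T where "T = {i. i < ?n \<and> ?f i \<in> \<tau>}"
  have "?f ` T = ?f ` {0..<?n} \<inter> \<tau>"
    unfolding T_def by auto
  then have T: "T \<subseteq> {0..<?n}" "?f ` T = \<tau>"
    unfolding T_def using nth_vertex_image[OF finite] assms(5) by auto
  then have "framed_small T (restrict_neck T G)"
    using normal_necklaces_restrict_framed_small[OF _ assms(3) G(1)] assms(2,6) finite
    by (auto simp: card_gt_0_iff)
  then have "framed_small \<tau> (map (apfst ?f) (restrict_neck T G))"
    using framed_small_map_apfst[OF inj_on_nth_vertex[OF finite] T(1)] T(2) by simp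
  also have "map (apfst ?f) (restrict_neck T G) = restrict_neck \<tau> (rotate k xs)"
    using restrict_neck_map_apfst[OF inj_on_nth_vertex[OF finite] T(1) normal_necklaces_colours[OF G(1)]] T(2) G(2)
    by simp
  finally show ?thesis
    using framed_small_neck_eq neck_eq_restrict_neck neck_eq_rotate neck_eq_sym by blast
qed

lemma cobdry_triangle:
  fixes v0 v1 v2 :: "'v::linorder"
  assumes "v0 < v1" "v1 < v2"
  shows "cobdry c {v0, v1, v2} = c {v1, v2} - c {v0, v2} + c {v0, v1}"
proof -
  let ?s = "{v0, v1, v2}"
  have distinct: "v0 \<noteq> v1" "v0 \<noteq> v2" "v1 \<noteq> v2"
    using assms by auto
  then have sum: "(\<Sum>v\<in>?s. h v) = h v0 + h v1 + h v2" for h :: "'v \<Rightarrow> 'b::comm_monoid_add"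
    by (simp add: add.assoc)
  have below: "{u \<in> ?s. u < v0} = {}" "{u \<in> ?s. u < v1} = {v0}" "{u \<in> ?s. u < v2} = {v0, v1}"
    using assms by auto
  have faces: "?s - {v0} = {v1, v2}" "?s - {v1} = {v0, v2}" "?s - {v2} = {v0, v1}"
    using distinct by auto
  show ?thesis
    unfolding cobdry_def sum below faces using distinct by simp
qed

lemma cobdry_tetrahedron:
  fixes v0 v1 v2 v3 :: "'v::linorder"
  assumes "v0 < v1" "v1 < v2" "v2 < v3"
  shows "cobdry c {v0, v1, v2, v3} = c {v1, v2, v3} - c {v0, v2, v3} + c {v0, v1, v3} - c {v0, v1, v2}"
proof -
  let ?s = "{v0, v1, v2, v3}"
  have distinct: "v0 \<noteq> v1" "v0 \<noteq> v2" "v0 \<noteq> v3" "v1 \<noteq> v2" "v1 \<noteq> v3" "v2 \<noteq> v3"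
    using assms by auto
  then have sum: "(\<Sum>v\<in>?s. h v) = h v0 + h v1 + h v2 + h v3" for h :: "'v \<Rightarrow> 'b::comm_monoid_add"
    by (simp add: add.assoc)
  have below: "{u \<in> ?s. u < v0} = {}" "{u \<in> ?s. u < v1} = {v0}" "{u \<in> ?s. u < v2} = {v0, v1}"
       "{u \<in> ?s. u < v3} = {v0, v1, v2}"
    using assms by auto
  have faces: "?s - {v0} = {v1, v2, v3}" "?s - {v1} = {v0, v2, v3}" "?s - {v2} = {v0, v1, v3}"
        "?s - {v3} = {v0, v1, v2}"
    using distinct by auto
  show ?thesis
    unfolding cobdry_def sum below faces using distinct by simp
qed

lemma cocycle_condition4_vertex_signs:
  fixes \<sigma> :: "'v::linorder set"
  assumes "finite \<sigma>" "card \<sigma> = 4"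
  shows "cocycle_condition4 (vertex_signs a \<sigma>) \<longleftrightarrow> cobdry (\<lambda>\<tau>. F (cobdry a \<tau>)) \<sigma> = 0"
proof -
  define vs where "vs = sorted_list_of_set \<sigma>"
  have "length vs = 4"
    using assms unfolding vs_def by simp
  then obtain v0 v1 v2 v3 where vs: "vs = [v0, v1, v2, v3]"
    by (auto simp: numeral_eq_Suc length_Suc_conv)
  moreover have "sorted_wrt (<) vs"
    unfolding vs_def by (rule strict_sorted_list_of_set)
  ultimately have "sorted_wrt (<) [v0, v1, v2, v3]"
    by simp
  then have less: "v0 < v1" "v1 < v2" "v2 < v3" "v0 < v2" "v0 < v3" "v1 < v3"
    by auto
  have "\<sigma> = {v0, v1, v2, v3}"
    using assms(1) vs unfolding vs_def by (metis set_sorted_list_of_set list.set(1) list.set(2))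
  moreover have "index_pairs 4 = [(0, 1), (0, 2), (0, 3), (1, 2), (1, 3), (2, 3)]"
    by code_simp
  ultimately show ?thesis
    unfolding cocycle_condition4_def vertex_signs_def nth_vertex_def vs_def[symmetric] vs assms(2)
    by (simp add: cobdry_tetrahedron cobdry_triangle less)
qed

text \<open>A junk value unless a normal form with the prescribed edge signs exists, which is what
  \<open>small_necklace_spec\<close> establishes.\<close>

definition small_necklace :: "('v set \<Rightarrow> int) \<Rightarrow> 'v::linorder set \<Rightarrow> 'v fnecklace" where
  "small_necklace a \<sigma> = map (apfst (nth_vertex \<sigma>))
     (SOME G. G \<in> set (normal_necklaces (card \<sigma>)) \<and> edge_signs (card \<sigma>) G = vertex_signs a \<sigma>)"

lemma small_necklace_spec:
  fixes \<sigma> :: "'v::linorder set"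
  assumes finite: "finite \<sigma>" and "\<sigma> \<noteq> {}" "card \<sigma> \<le> 4"
    and signs: "\<And>e. e \<subseteq> \<sigma> \<Longrightarrow> card e = 2 \<Longrightarrow> a e = 1 \<or> a e = -1"
    and cocycle: "card \<sigma> = 4 \<Longrightarrow> cobdry (\<lambda>\<tau>. F (cobdry a \<tau>)) \<sigma> = 0"
  shows "framed_small \<sigma> (small_necklace a \<sigma>) \<and> has_edge_signs a \<sigma> (small_necklace a \<sigma>)"
proof -
  let ?n = "card \<sigma>" and ?f = "nth_vertex \<sigma>"
  have n: "0 < ?n"
    using assms(1,2) by (simp add: card_gt_0_iff)
  have "set (vertex_signs a \<sigma>) \<subseteq> {1, -1}"
  proof
    fix s assume "s \<in> set (vertex_signs a \<sigma>)"
    then obtain p q where pq: "p < q" "q < ?n" "s = a {?f p, ?f q}"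
      unfolding vertex_signs_def by (auto simp: set_index_pairs)
    then have "{?f p, ?f q} \<subseteq> \<sigma>" "card {?f p, ?f q} = 2"
      using nth_vertex_image[OF finite] nth_vertex_less[OF finite pq(1,2)] by auto
    then show "s \<in> {1, -1}"
      using signs pq(3) by auto
  qed
  then have "\<exists>G\<in>set (normal_necklaces ?n). edge_signs ?n G = vertex_signs a \<sigma>"
    using edge_signs_surjective[OF n assms(3)] cocycle cocycle_condition4_vertex_signs[OF finite]
    by (simp add: vertex_signs_def)
  then obtain G where G: "G \<in> set (normal_necklaces ?n)" "edge_signs ?n G = vertex_signs a \<sigma>"
    and def: "small_necklace a \<sigma> = map (apfst ?f) G"
    unfolding small_necklace_def by (metis (mono_tags, lifting) someI_ex)
  have "restrict_neck {0..<?n} G = G"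
    using normal_necklaces_colours[OF G(1)] unfolding restrict_neck_def by (intro filter_True) auto
  then have "framed_small {0..<?n} G"
    using normal_necklaces_restrict_framed_small[OF n assms(3) G(1), of "{0..<?n}"] n by simp
  then have "framed_small \<sigma> (map (apfst ?f) G)"
    using framed_small_map_apfst[OF inj_on_nth_vertex[OF finite] subset_refl] nth_vertex_image[OF finite]
    by metis
  then show ?thesis
    using has_edge_signs_relabel_iff[OF finite G(1)] G(2) def by simp
qed

subsection \<open>Consistent collections\<close>

lemma skeleton_face:
  assumes complex: "simplicial_complex B" and "\<sigma> \<in> skeleton B k" "\<tau> \<noteq> {}" "\<tau> \<subseteq> \<sigma>"
  shows "\<tau> \<in> skeleton B k"
proof -
  have "\<sigma> \<in> B" "card \<sigma> \<le> k + 1"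
    using assms(2) unfolding skeleton_def by auto
  then have "finite \<sigma>" "\<tau> \<in> B"
    using complex assms(3,4) unfolding simplicial_complex_def by blast+
  moreover have "card \<tau> \<le> k + 1"
    using card_mono[OF \<open>finite \<sigma>\<close> assms(4)] \<open>card \<sigma> \<le> k + 1\<close> by simp
  ultimately show ?thesis
    unfolding skeleton_def by simp
qed

lemma skeleton_simplex:
  "simplicial_complex B \<Longrightarrow> \<sigma> \<in> skeleton B k \<Longrightarrow> finite \<sigma> \<and> \<sigma> \<noteq> {} \<and> card \<sigma> \<le> k + 1"
  unfolding skeleton_def simplicial_complex_def by auto

lemma consistent_fs_if_has_edge_signs:
  assumes complex: "simplicial_complex B" and "k \<le> 3"
    and N: "\<And>\<sigma>. \<sigma> \<in> skeleton B k \<Longrightarrow> framed_small \<sigma> (N \<sigma>) \<and> has_edge_signs a \<sigma> (N \<sigma>)"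
  shows "consistent_fs B k N"
  unfolding consistent_fs_def
proof (intro conjI ballI allI impI)
  fix \<sigma> \<tau> assume \<sigma>: "\<sigma> \<in> skeleton B k" and "\<tau> \<noteq> {}" "\<tau> \<subseteq> \<sigma>"
  then have \<tau>: "\<tau> \<in> skeleton B k"
    using skeleton_face[OF complex] by blast
  show "neck_eq (restrict_neck \<tau> (N \<sigma>)) (N \<tau>)"
  proof (rule has_edge_signs_unique)
    have "finite \<sigma>" "\<sigma> \<noteq> {}" "card \<sigma> \<le> 4"
      using skeleton_simplex[OF complex \<sigma>] \<open>k \<le> 3\<close> by auto
    then show "framed_small \<tau> (restrict_neck \<tau> (N \<sigma>))"
      using framed_small_restrict_neck N[OF \<sigma>] \<open>\<tau> \<noteq> {}\<close> \<open>\<tau> \<subseteq> \<sigma>\<close> by blast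
    show "has_edge_signs a \<tau> (restrict_neck \<tau> (N \<sigma>))"
      using has_edge_signs_restrict_neck N[OF \<sigma>] \<open>\<tau> \<subseteq> \<sigma>\<close> by blast
  qed (use N[OF \<tau>] skeleton_simplex[OF complex \<tau>] \<open>k \<le> 3\<close> in auto)
qed (use N in blast)

lemma has_edge_signs_if_consistent_fs:
  assumes complex: "simplicial_complex B" and "consistent_fs B k N" "\<sigma> \<in> skeleton B k"
    and edges: "\<And>i j. {i, j} \<in> B \<Longrightarrow> i < j \<Longrightarrow> edge_sign (N {i, j}) i j = a {i, j}"
  shows "has_edge_signs a \<sigma> (N \<sigma>)"
  unfolding has_edge_signs_def
proof (intro ballI impI)
  fix i j assume "i \<in> \<sigma>" "j \<in> \<sigma>" "i < j"
  then have "{i, j} \<in> skeleton B k"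
    using skeleton_face[OF complex \<open>\<sigma> \<in> skeleton B k\<close>] by auto
  moreover have "neck_eq (restrict_neck {i, j} (N \<sigma>)) (N {i, j})"
    using assms(2,3) \<open>i \<in> \<sigma>\<close> \<open>j \<in> \<sigma>\<close> unfolding consistent_fs_def by auto
  ultimately show "edge_sign (restrict_neck {i, j} (N \<sigma>)) i j = a {i, j}"
    using edge_sign_neck_eq edges \<open>i < j\<close> unfolding skeleton_def by fastforce
qed

lemma extends_to_3_unique:
  assumes complex: "simplicial_complex B" and "determined_by B a N2"
    and "extends_to_3 B N2 N3" "extends_to_3 B N2 N3'" "\<sigma> \<in> skeleton B 3"
  shows "neck_eq (N3 \<sigma>) (N3' \<sigma>)"
proof -
  have "framed_small \<sigma> (N \<sigma>) \<and> has_edge_signs a \<sigma> (N \<sigma>)" if "extends_to_3 B N2 N" for N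
  proof -
    have consistent: "consistent_fs B 3 N"
      using that unfolding extends_to_3_def by blast
    have "edge_sign (N {i, j}) i j = a {i, j}" if "{i, j} \<in> B" "i < j" for i j
    proof -
      have "{i, j} \<in> skeleton B 2"
        using that unfolding skeleton_def by (simp add: card_insert_if)
      then have "neck_eq (N {i, j}) (N2 {i, j})"
        using \<open>extends_to_3 B N2 N\<close> unfolding extends_to_3_def by blast
      then have "edge_sign (N {i, j}) i j = edge_sign (N2 {i, j}) i j"
        by (rule edge_sign_neck_eq)
      then show ?thesis
        using \<open>determined_by B a N2\<close> that unfolding determined_by_def by simp
    qed
    then show ?thesis
      using has_edge_signs_if_consistent_fs[OF complex consistent assms(5)] consistent assms(5)
      unfolding consistent_fs_def by blast
  qed
  then have "framed_small \<sigma> (N3 \<sigma>)" "has_edge_signs a \<sigma> (N3 \<sigma>)"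
    and "framed_small \<sigma> (N3' \<sigma>)" "has_edge_signs a \<sigma> (N3' \<sigma>)"
    using assms(3,4) by blast+
  then show ?thesis
    using has_edge_signs_unique[of \<sigma> "N3 \<sigma>" a "N3' \<sigma>"] skeleton_simplex[OF complex assms(5)] by auto
qed

context
  fixes B :: "'v::linorder set set" and a :: "'v set \<Rightarrow> int"
  assumes complex: "simplicial_complex B"
    and signs: "\<forall>e\<in>B. card e = 2 \<longrightarrow> a e = 1 \<or> a e = -1"
    and cocycle: "\<forall>\<sigma>\<in>B. card \<sigma> = 4 \<longrightarrow> cobdry (\<lambda>\<tau>. F (cobdry a \<tau>)) \<sigma> = 0"
begin

lemma small_necklace_on_skeleton:
  assumes "\<sigma> \<in> skeleton B 3"
  shows "framed_small \<sigma> (small_necklace a \<sigma>) \<and> has_edge_signs a \<sigma> (small_necklace a \<sigma>)"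
proof -
  have \<sigma>: "finite \<sigma>" "\<sigma> \<noteq> {}" "card \<sigma> \<le> 4" "\<sigma> \<in> B"
    using skeleton_simplex[OF complex assms] assms unfolding skeleton_def by auto
  have "a e = 1 \<or> a e = -1" if "e \<subseteq> \<sigma>" "card e = 2" for e
  proof -
    have "e \<noteq> {}"
      using that(2) by auto
    then have "e \<in> B"
      using complex \<sigma>(4) that(1) unfolding simplicial_complex_def by blast
    then show ?thesis
      using signs that(2) by blast
  qed
  then show ?thesis
    using small_necklace_spec[OF \<sigma>(1-3)] cocycle \<sigma>(4) by blast
qed

lemma determined_by_small_necklace: "determined_by B a (small_necklace a)"
  unfolding determined_by_def
proof (intro conjI allI impI)
  show "consistent_fs B 2 (small_necklace a)"
  proof (rule consistent_fs_if_has_edge_signs[OF complex, where a = a])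
    fix \<sigma> assume "\<sigma> \<in> skeleton B 2"
    then have "\<sigma> \<in> skeleton B 3"
      unfolding skeleton_def by simp
    then show "framed_small \<sigma> (small_necklace a \<sigma>) \<and> has_edge_signs a \<sigma> (small_necklace a \<sigma>)"
      by (rule small_necklace_on_skeleton)
  qed simp
  fix i j assume "{i, j} \<in> B" "i < j"
  then have "{i, j} \<in> skeleton B 3"
    unfolding skeleton_def by (simp add: card_insert_if)
  then have "framed_small {i, j} (small_necklace a {i, j})" "has_edge_signs a {i, j} (small_necklace a {i, j})"
    using small_necklace_on_skeleton by blast+
  then have "restrict_neck {i, j} (small_necklace a {i, j}) = small_necklace a {i, j}"
    and "edge_sign (restrict_neck {i, j} (small_necklace a {i, j})) i j = a {i, j}"
    using \<open>i < j\<close> restrict_neck_framed_small unfolding has_edge_signs_def by blast+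
  then show "edge_sign (small_necklace a {i, j}) i j = a {i, j}"
    by simp
qed

lemma extends_to_3_small_necklace:
  assumes "determined_by B a N2"
  shows "extends_to_3 B N2 (\<lambda>\<sigma>. if card \<sigma> \<le> 3 then N2 \<sigma> else small_necklace a \<sigma>)"
    (is "extends_to_3 B N2 ?N3")
  unfolding extends_to_3_def
proof (intro conjI ballI)
  have consistent: "consistent_fs B 2 N2"
    and edges: "\<And>i j. {i, j} \<in> B \<Longrightarrow> i < j \<Longrightarrow> edge_sign (N2 {i, j}) i j = a {i, j}"
    using assms unfolding determined_by_def by blast+
  have "framed_small \<sigma> (?N3 \<sigma>) \<and> has_edge_signs a \<sigma> (?N3 \<sigma>)" if "\<sigma> \<in> skeleton B 3" for \<sigma>
  proof (cases "card \<sigma> \<le> 3")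
    case True
    then have "\<sigma> \<in> skeleton B 2"
      using that unfolding skeleton_def by simp
    then show ?thesis
      using True consistent has_edge_signs_if_consistent_fs[OF complex consistent _ edges]
      unfolding consistent_fs_def by simp
  qed (use small_necklace_on_skeleton[OF that] in simp)
  then show "consistent_fs B 3 ?N3"
    by (intro consistent_fs_if_has_edge_signs[OF complex, where a = a]) auto
  show "neck_eq (?N3 \<sigma>) (N2 \<sigma>)" if "\<sigma> \<in> skeleton B 2" for \<sigma>
    using that unfolding skeleton_def by (simp add: neck_eq_refl)
qed

end

theorem mainTheorem11:
  fixes B :: "'v::linorder set set" and a :: "'v set \<Rightarrow> int"
  assumes "finite B" and "simplicial_complex B"
    and "\<forall>e\<in>B. card e = 2 \<longrightarrow> a e = 1 \<or> a e = -1"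
    and "\<forall>\<sigma>\<in>B. card \<sigma> = 4 \<longrightarrow> cobdry (\<lambda>\<tau>. F (cobdry a \<tau>)) \<sigma> = 0"
  shows "(\<exists>N2. determined_by B a N2) \<and>
         (\<forall>N2. determined_by B a N2 \<longrightarrow>
            (\<exists>N3. extends_to_3 B N2 N3) \<and>
            (\<forall>N3 N3'. extends_to_3 B N2 N3 \<longrightarrow> extends_to_3 B N2 N3' \<longrightarrow>
               (\<forall>\<sigma>\<in>skeleton B 3. neck_eq (N3 \<sigma>) (N3' \<sigma>))))"
  using determined_by_small_necklace[OF assms(2-4)] extends_to_3_small_necklace[OF assms(2-4)]
    extends_to_3_unique[OF assms(2)]
  by blast

end
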